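(* For all $t_1, t_2 \in \mathcal{L}_s$, $t_1 =_{\mathcal{L}} t_2$ if and only if $t_1 = t_2$ (syntactic equality, i.e. same symbol and same arguments).
   Context: $\mathcal{X}$ is a countable set of variables; a valuation is $\sigma\colon\mathcal{X}\to\mathbb{N}$. For finite $E\subseteq\mathcal{X}$, $x\in\mathcal{X}$, $S\in\mathbb{N}$, the sublevels $A(E,x,S)$ and $B(E,S)$ have values $[A(E,x,S)]_\sigma = 0$ if some $y\in E$ has $\sigma(y)=0$, and $\sigma(x)+S$ otherwise; $[B(E,S)]_\sigma=0$ if some $y\in E$ has $\sigma(y)=0$, and $S$ otherwise. $\mathcal{L}_s$ is the set of sublevels $A(E,x,S)$ with $x \in E$ and $B(E,S)$ with $S>0$. $t_1 =_{\mathcal{L}} t_2$ means $[t_1]_\sigma = [t_2]_\sigma$ for every valuation $\sigma$. *)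

theory Defs
  imports "HOL-Library.Countable"
begin

datatype 'v sublevel = A "'v set" 'v nat | B "'v set" nat

fun sval :: "('v \<Rightarrow> nat) \<Rightarrow> 'v sublevel \<Rightarrow> nat" where
  "sval \<sigma> (A E x S) = (if \<exists>y\<in>E. \<sigma> y = 0 then 0 else \<sigma> x + S)"
| "sval \<sigma> (B E S) = (if \<exists>y\<in>E. \<sigma> y = 0 then 0 else S)"

fun in_Ls :: "'v sublevel \<Rightarrow> bool" where
  "in_Ls (A E x S) = (finite E \<and> x \<in> E)"
| "in_Ls (B E S) = (finite E \<and> S > 0)"

definition sem_eq :: "'v sublevel \<Rightarrow> 'v sublevel \<Rightarrow> bool" where
  "sem_eq t1 t2 \<longleftrightarrow> (\<forall>\<sigma>. sval \<sigma> t1 = sval \<sigma> t2)"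

end

theory Submission
  imports Defs
begin

text \<open>A sublevel of \<open>\<L>\<^sub>s\<close> vanishes exactly when a variable of its guard \<open>E\<close> vanishes: otherwise
  \<open>x \<in> E\<close> makes \<open>\<sigma> x + S\<close> positive and \<open>S > 0\<close> makes \<open>S\<close> positive. Testing with the valuation
  that is zero at a single variable therefore recovers the guard from the semantics. On
  valuations without zeros, \<open>A E x S\<close> denotes \<open>\<sigma> x + S\<close> and \<open>B E S\<close> the constant \<open>S\<close>, and these
  functions of \<open>\<sigma>\<close> determine \<open>x\<close> and \<open>S\<close>.\<close>

fun guard :: "'v sublevel \<Rightarrow> 'v set" where
  "guard (A E x S) = E"
| "guard (B E S) = E"

lemma sem_eq_sym: "sem_eq t1 t2 \<Longrightarrow> sem_eq t2 t1"
  by (simp add: sem_eq_def)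

lemma sval_eq_0_iff:
  assumes "in_Ls t"
  shows "sval \<sigma> t = 0 \<longleftrightarrow> (\<exists>y\<in>guard t. \<sigma> y = 0)"
  using assms by (cases t) auto

lemma guard_eq_if_sem_eq:
  assumes "in_Ls t1" and "in_Ls t2" and "sem_eq t1 t2"
  shows "guard t1 = guard t2"
proof -
  have "y \<in> guard t1 \<longleftrightarrow> y \<in> guard t2" for y
  proof -
    let ?\<sigma> = "\<lambda>v. if v = y then 0 else 1 :: nat"
    have "y \<in> guard t \<longleftrightarrow> sval ?\<sigma> t = 0" if "in_Ls t" for t
      using sval_eq_0_iff[OF that] by auto
    with assms show ?thesis
      by (simp add: sem_eq_def)
  qed
  then show ?thesis
    by blast
qed

lemma not_sem_eq_A_B: "\<not> sem_eq (A E x S) (B E' S')"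
proof
  assume "sem_eq (A E x S) (B E' S')"
  then have "c + S = S'" if "c > 0" for c :: nat
    using that by (auto simp: sem_eq_def dest: spec[of _ "\<lambda>_. c"])
  from this[of 1] this[of 2] show False
    by simp
qed

lemma sem_eq_A_A:
  assumes "sem_eq (A E x S) (A E' x' S')"
  shows "x = x' \<and> S = S'"
proof -
  have same_value: "sval \<sigma> (A E x S) = sval \<sigma> (A E' x' S')" for \<sigma>
    using assms by (simp add: sem_eq_def)
  from same_value[of "\<lambda>_. 1"] have "S = S'"
    by simp
  moreover from same_value[of "\<lambda>v. if v = x then 2 else 1"] have "x' = x"
    using \<open>S = S'\<close> by (simp split: if_splits)
  ultimately show ?thesis
    by simp
qed

lemma sem_eq_B_B:
  assumes "sem_eq (B E S) (B E' S')"
  shows "S = S'"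
  using assms[unfolded sem_eq_def, THEN spec, of "\<lambda>_. 1"] by simp

theorem corollary30:
  fixes t1 t2 :: "'v::countable sublevel"
  assumes "in_Ls t1" and "in_Ls t2"
  shows "sem_eq t1 t2 \<longleftrightarrow> t1 = t2"
proof
  assume eq: "sem_eq t1 t2"
  have "guard t1 = guard t2"
    using guard_eq_if_sem_eq[OF assms eq] .
  with eq show "t1 = t2"
    by (cases t1; cases t2)
      (auto dest: sem_eq_A_A sem_eq_B_B sem_eq_sym simp: not_sem_eq_A_B)
qed (simp add: sem_eq_def)

end
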